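(* For every maximal consistent set $X$ (relative to the axiom system of $\mathbb{PCL}$), the relation $\le_X$ on formulas, defined by $A\le_X B$ iff $(A\lor B)>A\in X$, is reflexive and transitive.
   Context: Formulas $\mathcal{L}::=p\mid\bot\mid A\wedge B\mid A\lor B\mid A\to B\mid A>B$. The axiom system of $\mathbb{PCL}$: classical propositional logic, rules (RCEA) from $A\leftrightarrow B$ infer $(A>C)\leftrightarrow(B>C)$, (RCK) from $A\to B$ infer $(C>A)\to(C>B)$, axioms (ID) $A>A$, (R-And) $(A>B)\wedge(A>C)\to(A>(B\wedge C))$, (CM) $(A>B)\wedge(A>C)\to((A\wedge B)>C)$, (OR) $(A>C)\wedge(B>C)\to((A\lor B)>C)$. Maximal consistent sets are the usual ones relative to this axiom system. *)

theory Defs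
  imports Main
begin

datatype 'p fm =
    Atom 'p
  | Bot
  | Conj "'p fm" "'p fm"
  | Disj "'p fm" "'p fm"
  | Imp "'p fm" "'p fm"
  | Cond "'p fm" "'p fm"

definition Neg :: "'p fm \<Rightarrow> 'p fm" where
  "Neg A = Imp A Bot"

definition Iff :: "'p fm \<Rightarrow> 'p fm \<Rightarrow> 'p fm" where
  "Iff A B = Conj (Imp A B) (Imp B A)"

text \<open>Classical propositional evaluation: atoms and conditionals A > B are treated as
  propositional atoms, valued by v.\<close>
fun peval :: "('p fm \<Rightarrow> bool) \<Rightarrow> 'p fm \<Rightarrow> bool" where
  "peval v (Atom p) = v (Atom p)"
| "peval v Bot = False"
| "peval v (Conj A B) = (peval v A \<and> peval v B)"
| "peval v (Disj A B) = (peval v A \<or> peval v B)"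
| "peval v (Imp A B) = (peval v A \<longrightarrow> peval v B)"
| "peval v (Cond A B) = v (Cond A B)"

definition taut :: "'p fm \<Rightarrow> bool" where
  "taut A = (\<forall>v. peval v A)"

inductive pcl :: "'p fm \<Rightarrow> bool" where
  Taut: "taut A \<Longrightarrow> pcl A"
| MP: "pcl (Imp A B) \<Longrightarrow> pcl A \<Longrightarrow> pcl B"
| RCEA: "pcl (Iff A B) \<Longrightarrow> pcl (Iff (Cond A C) (Cond B C))"
| RCK: "pcl (Imp A B) \<Longrightarrow> pcl (Imp (Cond C A) (Cond C B))"
| ID: "pcl (Cond A A)"
| RAnd: "pcl (Imp (Conj (Cond A B) (Cond A C)) (Cond A (Conj B C)))"
| CM: "pcl (Imp (Conj (Cond A B) (Cond A C)) (Cond (Conj A B) C))"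
| OR: "pcl (Imp (Conj (Cond A C) (Cond B C)) (Cond (Disj A B) C))"

definition derives :: "'p fm set \<Rightarrow> 'p fm \<Rightarrow> bool" where
  "derives X A = (\<exists>Gs. set Gs \<subseteq> X \<and> pcl (foldr Imp Gs A))"

definition consistent :: "'p fm set \<Rightarrow> bool" where
  "consistent X = (\<not> derives X Bot)"

definition max_consistent :: "'p fm set \<Rightarrow> bool" where
  "max_consistent X = (consistent X \<and> (\<forall>A. A \<notin> X \<longrightarrow> \<not> consistent (insert A X)))"

definition leX :: "'p fm set \<Rightarrow> 'p fm \<Rightarrow> 'p fm \<Rightarrow> bool" where
  "leX X A B = (Cond (Disj A B) A \<in> X)"

end

theory Submission
  imports Defs
begin

text \<open>Write \<open>A \<le> B\<close> for \<open>(A \<or> B) > A \<in> X\<close>. Reflexivity is ID up to RCEA. For transitivity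
  let \<open>D = (A \<or> B) \<or> (B \<or> C)\<close>. From \<open>B \<le> C\<close> and OR we get \<open>D > A \<or> B\<close>; cutting with \<open>A \<le> B\<close>
  gives \<open>D > A\<close>, hence \<open>D > A \<or> C\<close>, and cautious monotonicity yields \<open>(D \<and> (A \<or> C)) > A\<close>,
  whose antecedent is equivalent to \<open>A \<or> C\<close>. Cut itself is derivable in PCL from OR,
  R-And and ID by splitting the antecedent on \<open>B\<close>.\<close>

lemma peval_foldr_Imp:
  "peval v (foldr Imp Gs B) = ((\<forall>G\<in>set Gs. peval v G) \<longrightarrow> peval v B)"
  by (induction Gs) auto

lemma pcl_Imp_if_valid: "(\<And>v. peval v A \<Longrightarrow> peval v B) \<Longrightarrow> pcl (Imp A B)"
  by (rule pcl.Taut) (simp add: taut_def)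

lemma pcl_valid_consequence: "pcl A \<Longrightarrow> (\<And>v. peval v A \<Longrightarrow> peval v B) \<Longrightarrow> pcl B"
  using pcl.MP pcl_Imp_if_valid by blast

lemma pcl_Conj: "pcl A \<Longrightarrow> pcl B \<Longrightarrow> pcl (Conj A B)"
  using pcl.MP pcl_Imp_if_valid[of A "Imp B (Conj A B)"] by auto

lemma max_consistent_derives:
  assumes mcs: "max_consistent X" and "derives X A"
  shows "A \<in> X"
proof (rule ccontr)
  assume "A \<notin> X"
  with mcs obtain Hs where Hs: "set Hs \<subseteq> insert A X" "pcl (foldr Imp Hs Bot)"
    unfolding max_consistent_def consistent_def derives_def by blast
  from \<open>derives X A\<close> obtain Gs where Gs: "set Gs \<subseteq> X" "pcl (foldr Imp Gs A)"
    unfolding derives_def by blast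
  let ?Ks = "filter (\<lambda>H. H \<noteq> A) Hs @ Gs"
  have "pcl (Conj (foldr Imp Hs Bot) (foldr Imp Gs A))"
    using Hs(2) Gs(2) by (rule pcl_Conj)
  then have "pcl (foldr Imp ?Ks Bot)"
    by (rule pcl_valid_consequence) (auto simp: peval_foldr_Imp)
  moreover have "set ?Ks \<subseteq> X" using Hs(1) Gs(1) by auto
  ultimately have "derives X Bot" unfolding derives_def by blast
  with mcs show False unfolding max_consistent_def consistent_def by blast
qed

context
  fixes X :: "'p fm set"
  assumes mcs: "max_consistent X"
begin

lemma max_consistent_pcl: "pcl A \<Longrightarrow> A \<in> X"
  by (rule max_consistent_derives[OF mcs]) (auto simp: derives_def intro: exI[of _ "[]"])

lemma max_consistent_Imp: "pcl (Imp A B) \<Longrightarrow> A \<in> X \<Longrightarrow> B \<in> X"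
  by (rule max_consistent_derives[OF mcs]) (auto simp: derives_def intro: exI[of _ "[A]"])

lemma max_consistent_Imp_Conj: "pcl (Imp (Conj A B) C) \<Longrightarrow> A \<in> X \<Longrightarrow> B \<in> X \<Longrightarrow> C \<in> X"
proof -
  assume "pcl (Imp (Conj A B) C)" "A \<in> X" "B \<in> X"
  from \<open>pcl (Imp (Conj A B) C)\<close> have "pcl (foldr Imp [A, B] C)"
    by (rule pcl_valid_consequence) auto
  with \<open>A \<in> X\<close> \<open>B \<in> X\<close> have "derives X C"
    unfolding derives_def by (intro exI[of _ "[A, B]"]) auto
  then show "C \<in> X" by (rule max_consistent_derives[OF mcs])
qed

lemma Cond_refl: "Cond A A \<in> X"
  using max_consistent_pcl pcl.ID by blast

lemma Cond_mono: "(\<And>v. peval v B \<Longrightarrow> peval v B') \<Longrightarrow> Cond A B \<in> X \<Longrightarrow> Cond A B' \<in> X"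
  using max_consistent_Imp pcl.RCK pcl_Imp_if_valid by blast

lemma Cond_ant_cong: "(\<And>v. peval v A = peval v A') \<Longrightarrow> Cond A B \<in> X \<Longrightarrow> Cond A' B \<in> X"
proof -
  assume "\<And>v. peval v A = peval v A'"
  then have "pcl (Iff A A')" by (intro pcl.Taut) (simp add: taut_def Iff_def)
  then have "pcl (Iff (Cond A B) (Cond A' B))" by (rule pcl.RCEA)
  then have "pcl (Imp (Cond A B) (Cond A' B))"
    by (rule pcl_valid_consequence) (simp add: Iff_def)
  then show "Cond A B \<in> X \<Longrightarrow> Cond A' B \<in> X" by (rule max_consistent_Imp)
qed

lemma Cond_Disj_ant: "Cond A C \<in> X \<Longrightarrow> Cond B C \<in> X \<Longrightarrow> Cond (Disj A B) C \<in> X"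
  using max_consistent_Imp_Conj pcl.OR by blast

lemma Cond_Conj: "Cond A B \<in> X \<Longrightarrow> Cond A C \<in> X \<Longrightarrow> Cond A (Conj B C) \<in> X"
  using max_consistent_Imp_Conj pcl.RAnd by blast

lemma Cond_cautious_mono: "Cond A B \<in> X \<Longrightarrow> Cond A C \<in> X \<Longrightarrow> Cond (Conj A B) C \<in> X"
  using max_consistent_Imp_Conj pcl.CM by blast

lemma Cond_cut:
  assumes "Cond A B \<in> X" and "Cond (Conj A B) C \<in> X"
  shows "Cond A C \<in> X"
proof -
  have "Cond (Conj A B) (Disj (Neg B) C) \<in> X"
    using Cond_mono[OF _ assms(2)] by simp
  moreover have "Cond (Conj A (Neg B)) (Disj (Neg B) C) \<in> X"
    using Cond_mono[OF _ Cond_refl[of "Conj A (Neg B)"]] by simp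
  ultimately have "Cond (Disj (Conj A B) (Conj A (Neg B))) (Disj (Neg B) C) \<in> X"
    by (rule Cond_Disj_ant)
  then have "Cond A (Disj (Neg B) C) \<in> X"
    by (rule Cond_ant_cong[rotated]) (auto simp: Neg_def)
  with assms(1) have "Cond A (Conj B (Disj (Neg B) C)) \<in> X"
    by (rule Cond_Conj)
  then show ?thesis by (rule Cond_mono[rotated]) (auto simp: Neg_def)
qed

lemma leX_refl: "leX X A A"
  unfolding leX_def using Cond_ant_cong[OF _ Cond_refl, of A "Disj A A"] by simp

lemma leX_trans:
  assumes "leX X A B" and "leX X B C"
  shows "leX X A C"
proof -
  let ?D = "Disj (Disj A B) (Disj B C)"
  have AB: "Cond (Disj A B) A \<in> X" and BC: "Cond (Disj B C) B \<in> X"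
    using assms unfolding leX_def by auto
  have "Cond (Disj B C) (Disj A B) \<in> X" using Cond_mono[OF _ BC] by simp
  then have "Cond ?D (Disj A B) \<in> X" by (rule Cond_Disj_ant[OF Cond_refl])
  moreover have "Cond (Conj ?D (Disj A B)) A \<in> X"
    using Cond_ant_cong[OF _ AB, of "Conj ?D (Disj A B)"] by auto
  ultimately have DA: "Cond ?D A \<in> X" by (rule Cond_cut)
  have "Cond ?D (Disj A C) \<in> X" using Cond_mono[OF _ DA] by simp
  then have "Cond (Conj ?D (Disj A C)) A \<in> X" using DA by (rule Cond_cautious_mono)
  then have "Cond (Disj A C) A \<in> X" by (rule Cond_ant_cong[rotated]) auto
  then show ?thesis unfolding leX_def .
qed

end

theorem mainTheorem5:
  fixes X :: "'p fm set"
  assumes "max_consistent X"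
  shows "(\<forall>A. leX X A A) \<and> (\<forall>A B C. leX X A B \<longrightarrow> leX X B C \<longrightarrow> leX X A C)"
  using leX_refl[OF assms] leX_trans[OF assms] by blast

end
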